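(* Let $G$ be a countable group, let $\mathcal{L}:G\to[0,\infty)$ be subadditive (i.e.\ $\mathcal{L}(st)\le\mathcal{L}(s)+\mathcal{L}(t)$ for all $s,t\in G$), and let $\mu$ be a probability measure on $G$ with $\sum_{s\in G}\mu(s)\log(1+\mathcal{L}(s))<\infty$. Then \[ \mathrm{Ly}_{1+\mathcal{L}}(G,\mu)=\lim_{n\to\infty}\frac1n\sum_{s\in G}\mu^{*n}(s)\log(1+\mathcal{L}(s))=0. \]
   Context: $\mu^{*n}$ denotes the $n$-fold convolution power of $\mu$, where $\mu*\nu(s)=\sum_t\mu(t)\nu(t^{-1}s)$. *)

theory Defs
  imports "HOL-Analysis.Analysis" "HOL-Algebra.Group"
begin

definition conv :: "('a, 'b) monoid_scheme \<Rightarrow> ('a \<Rightarrow> real) \<Rightarrow> ('a \<Rightarrow> real) \<Rightarrow> 'a \<Rightarrow> real" where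
  "conv G \<mu> \<nu> s = (\<Sum>\<^sub>\<infinity>t\<in>carrier G. \<mu> t * \<nu> (inv\<^bsub>G\<^esub> t \<otimes>\<^bsub>G\<^esub> s))"

fun conv_pow :: "('a, 'b) monoid_scheme \<Rightarrow> ('a \<Rightarrow> real) \<Rightarrow> nat \<Rightarrow> 'a \<Rightarrow> real" where
  "conv_pow G \<mu> 0 = (\<lambda>s. if s = \<one>\<^bsub>G\<^esub> then 1 else 0)"
| "conv_pow G \<mu> (Suc n) = conv G (conv_pow G \<mu> n) \<mu>"

definition Ly :: "('a, 'b) monoid_scheme \<Rightarrow> ('a \<Rightarrow> real) \<Rightarrow> ('a \<Rightarrow> real) \<Rightarrow> real" where
  "Ly G L \<mu> = lim (\<lambda>n. (1 / real n) * (\<Sum>\<^sub>\<infinity>s\<in>carrier G. conv_pow G \<mu> n s * ln (1 + L s)))"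

end

theory Submission
  imports Defs "HOL-Real_Asymp.Real_Asymp"
begin

(* Fix a threshold K > 0. Subadditivity of L gives, for c >= 1,
     ln (c + L (t u)) <= ln (c + K + L t) + [L u > K] ln (1 + L u),
   so one more convolution with mu raises the c-shifted log-moment by at most
   the tail eps(K) = sum of mu u ln (1 + L u) over L u > K, at the price of
   replacing c by c + K. Starting from the Dirac mass at 1 this gives
     sum_s mu^{*n}(s) ln (1 + L s) <= ln (1 + n K + L 1) + n eps(K).
   Divided by n, the first term tends to 0, and eps(K) is arbitrarily small for
   large K by the moment assumption. *)

lemma conv_nonneg:
  fixes G :: "('a, 'b) monoid_scheme"
  assumes "group G"
    and "\<And>t. t \<in> carrier G \<Longrightarrow> q t \<ge> 0"
    and "\<And>u. u \<in> carrier G \<Longrightarrow> \<mu> u \<ge> 0"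
    and "s \<in> carrier G"
  shows "conv G q \<mu> s \<ge> 0"
proof -
  interpret group G by fact
  show ?thesis
    unfolding conv_def using assms by (intro infsum_nonneg) auto
qed

lemma has_sum_conv_weighted:
  fixes G :: "('a, 'b) monoid_scheme" (structure)
  assumes "group G"
    and q_nonneg: "\<And>t. t \<in> carrier G \<Longrightarrow> q t \<ge> 0"
    and \<mu>_nonneg: "\<And>u. u \<in> carrier G \<Longrightarrow> \<mu> u \<ge> 0"
    and \<psi>_nonneg: "\<And>s. s \<in> carrier G \<Longrightarrow> \<psi> s \<ge> 0"
    and row: "\<And>t. t \<in> carrier G \<Longrightarrow> ((\<lambda>u. \<mu> u * \<psi> (t \<otimes> u)) has_sum r t) (carrier G)"
    and total: "((\<lambda>t. q t * r t) has_sum S) (carrier G)"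
  shows "((\<lambda>s. conv G q \<mu> s * \<psi> s) has_sum S) (carrier G)"
proof -
  interpret group G by fact
  (* Tonelli on carrier G \<times> carrier G; the row sums come from substituting s = t \<otimes> u. *)
  define F where "F = (\<lambda>(t, s). q t * \<mu> (inv t \<otimes> s) * \<psi> s)"
  have F_row: "((\<lambda>s. F (t, s)) has_sum q t * r t) (carrier G)" if t: "t \<in> carrier G" for t
  proof -
    have "((\<lambda>s. \<mu> (inv t \<otimes> s) * \<psi> s) has_sum r t) (carrier G)"
      using has_sum_reindex_bij_witness[where i="\<lambda>u. t \<otimes> u" and j="\<lambda>s. inv t \<otimes> s"
          and S="carrier G" and T="carrier G" and h="\<lambda>u. \<mu> u * \<psi> (t \<otimes> u)"] row[OF t] t
      by (simp add: m_assoc[symmetric])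
    from has_sum_cmult_right[OF this, of "q t"] show ?thesis
      by (simp add: F_def mult.assoc)
  qed
  have F_nonneg: "F (t, s) \<ge> 0" if "t \<in> carrier G" "s \<in> carrier G" for t s
    using that by (simp add: F_def q_nonneg \<mu>_nonneg \<psi>_nonneg)
  have "F summable_on carrier G \<times> carrier G"
    using F_row has_sum_imp_summable[OF total] F_nonneg by (rule summable_on_SigmaI)
  then have "(F has_sum S) (carrier G \<times> carrier G)"
    using F_row total by (intro has_sum_SigmaI)
  then have F_swapped: "((\<lambda>(s, t). F (t, s)) has_sum S) (carrier G \<times> carrier G)"
    by (rule has_sum_swap[THEN iffD1])
  have F_column: "((\<lambda>t. F (t, s)) has_sum conv G q \<mu> s * \<psi> s) (carrier G)"
    if "s \<in> carrier G" for s
  proof -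
    have "(\<lambda>t. F (t, s)) summable_on carrier G"
      using summable_on_SigmaD1[OF has_sum_imp_summable[OF F_swapped] that] by simp
    then show ?thesis
      by (simp add: F_def conv_def infsum_cmult_left' summable_iff_has_sum_infsum)
  qed
  show ?thesis
    by (rule has_sum_SigmaD[OF F_swapped]) (simp add: F_column)
qed

lemma has_sum_conv_pow_0:
  fixes G :: "('a, 'b) monoid_scheme" (structure)
  assumes "group G"
  shows "((\<lambda>s. conv_pow G \<mu> 0 s * f s) has_sum f \<one>) (carrier G)"
proof -
  interpret group G by fact
  have "((\<lambda>s. conv_pow G \<mu> 0 s * f s) has_sum f \<one>) {\<one>}"
    by (rule has_sum_finiteI) simp_all
  then show ?thesis
    by (rule has_sum_cong_neutral[THEN iffD1, rotated -1]) auto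
qed

lemma conv_pow_nonneg:
  fixes G :: "('a, 'b) monoid_scheme"
  assumes "group G" and "\<And>u. u \<in> carrier G \<Longrightarrow> \<mu> u \<ge> 0" and "s \<in> carrier G"
  shows "conv_pow G \<mu> n s \<ge> 0"
  using assms(3) by (induction n arbitrary: s) (simp_all add: conv_nonneg assms(1,2))

lemma has_sum_conv_pow:
  fixes G :: "('a, 'b) monoid_scheme"
  assumes "group G"
    and \<mu>_nonneg: "\<And>u. u \<in> carrier G \<Longrightarrow> \<mu> u \<ge> 0"
    and \<mu>_sum: "(\<mu> has_sum 1) (carrier G)"
  shows "(conv_pow G \<mu> n has_sum 1) (carrier G)"
proof (induction n)
  case 0
  show ?case
    using has_sum_conv_pow_0[OF \<open>group G\<close>, of \<mu> "\<lambda>_. 1"] by simp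
next
  case (Suc n)
  have "((\<lambda>s. conv G (conv_pow G \<mu> n) \<mu> s * 1) has_sum 1) (carrier G)"
    using \<mu>_sum Suc.IH
    by (intro has_sum_conv_weighted[where r="\<lambda>_. 1"] \<open>group G\<close> conv_pow_nonneg \<mu>_nonneg) simp_all
  then show ?case by simp
qed

lemma conv_weighted_infsum_le:
  fixes G :: "('a, 'b) monoid_scheme" (structure)
  assumes "group G"
    and \<nu>_nonneg: "\<And>t. t \<in> carrier G \<Longrightarrow> \<nu> t \<ge> 0" and \<nu>_sum: "(\<nu> has_sum 1) (carrier G)"
    and \<mu>_nonneg: "\<And>u. u \<in> carrier G \<Longrightarrow> \<mu> u \<ge> 0" and \<mu>_sum: "(\<mu> has_sum 1) (carrier G)"
    and \<psi>_nonneg: "\<And>s. s \<in> carrier G \<Longrightarrow> \<psi> s \<ge> 0"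
    and \<psi>_le: "\<And>t u. t \<in> carrier G \<Longrightarrow> u \<in> carrier G \<Longrightarrow> \<psi> (t \<otimes> u) \<le> \<phi> t + \<tau> u"
    and \<phi>_summable: "(\<lambda>t. \<nu> t * \<phi> t) summable_on carrier G"
    and \<tau>_summable: "(\<lambda>u. \<mu> u * \<tau> u) summable_on carrier G"
  shows "(\<lambda>s. conv G \<nu> \<mu> s * \<psi> s) summable_on carrier G \<and>
    (\<Sum>\<^sub>\<infinity>s\<in>carrier G. conv G \<nu> \<mu> s * \<psi> s)
      \<le> (\<Sum>\<^sub>\<infinity>t\<in>carrier G. \<nu> t * \<phi> t) + (\<Sum>\<^sub>\<infinity>u\<in>carrier G. \<mu> u * \<tau> u)"
proof -
  interpret group G by fact
  define B where "B = (\<Sum>\<^sub>\<infinity>u\<in>carrier G. \<mu> u * \<tau> u)"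
  define r where "r t = (\<Sum>\<^sub>\<infinity>u\<in>carrier G. \<mu> u * \<psi> (t \<otimes> u))" for t
  have dominating_row: "((\<lambda>u. \<mu> u * \<phi> t + \<mu> u * \<tau> u) has_sum \<phi> t + B) (carrier G)" for t
    using has_sum_add[OF has_sum_cmult_left[OF \<mu>_sum, of "\<phi> t"] has_sum_infsum[OF \<tau>_summable]]
    by (simp add: B_def)
  have row_le: "\<mu> u * \<psi> (t \<otimes> u) \<le> \<mu> u * \<phi> t + \<mu> u * \<tau> u"
    if "t \<in> carrier G" "u \<in> carrier G" for t u
    using mult_left_mono[OF \<psi>_le[OF that] \<mu>_nonneg[OF that(2)]] by (simp add: distrib_left)
  have row: "((\<lambda>u. \<mu> u * \<psi> (t \<otimes> u)) has_sum r t) (carrier G)" if "t \<in> carrier G" for t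
    unfolding r_def using that row_le \<mu>_nonneg \<psi>_nonneg
    by (intro has_sum_infsum summable_on_comparison_test[OF has_sum_imp_summable[OF dominating_row]])
      auto
  have r_le: "r t \<le> \<phi> t + B" if "t \<in> carrier G" for t
    using has_sum_mono[OF row[OF that] dominating_row] row_le that by blast
  have r_nonneg: "r t \<ge> 0" if "t \<in> carrier G" for t
    using has_sum_nonneg[OF row[OF that]] that \<mu>_nonneg \<psi>_nonneg by auto
  have dominating_total: "((\<lambda>t. \<nu> t * \<phi> t + \<nu> t * B) has_sum
      (\<Sum>\<^sub>\<infinity>t\<in>carrier G. \<nu> t * \<phi> t) + B) (carrier G)"
    using has_sum_add[OF has_sum_infsum[OF \<phi>_summable] has_sum_cmult_left[OF \<nu>_sum, of B]]
    by simp
  have total_le: "\<nu> t * r t \<le> \<nu> t * \<phi> t + \<nu> t * B" if "t \<in> carrier G" for t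
    using mult_left_mono[OF r_le[OF that] \<nu>_nonneg[OF that]] by (simp add: distrib_left)
  have total: "((\<lambda>t. \<nu> t * r t) has_sum (\<Sum>\<^sub>\<infinity>t\<in>carrier G. \<nu> t * r t)) (carrier G)"
    using total_le \<nu>_nonneg r_nonneg
    by (intro has_sum_infsum summable_on_comparison_test[OF has_sum_imp_summable[OF dominating_total]])
      auto
  have conv_sum: "((\<lambda>s. conv G \<nu> \<mu> s * \<psi> s) has_sum (\<Sum>\<^sub>\<infinity>t\<in>carrier G. \<nu> t * r t)) (carrier G)"
    by (rule has_sum_conv_weighted[OF \<open>group G\<close> \<nu>_nonneg \<mu>_nonneg \<psi>_nonneg row total])
  have "(\<Sum>\<^sub>\<infinity>t\<in>carrier G. \<nu> t * r t) \<le> (\<Sum>\<^sub>\<infinity>t\<in>carrier G. \<nu> t * \<phi> t) + B"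
    using has_sum_mono[OF total dominating_total] total_le by blast
  then show ?thesis
    using has_sum_imp_summable[OF conv_sum] infsumI[OF conv_sum] by (simp add: B_def)
qed

lemma ln_add_le_split_at_threshold:
  fixes c K a b x :: real
  assumes "c \<ge> 1" "K \<ge> 0" "a \<ge> 0" "b \<ge> 0" "0 \<le> x" "x \<le> a + b"
  shows "ln (c + x) \<le> ln (c + K + a) + (if b > K then ln (1 + b) else 0)"
proof (cases "b > K")
  case True
  have "c + x \<le> (c + K + a) * (1 + b)"
    using assms mult_right_mono[of 1 "c + K + a" b] by (simp add: algebra_simps)
  then have "ln (c + x) \<le> ln ((c + K + a) * (1 + b))"
    using assms by (intro ln_mono) auto
  also have "\<dots> = ln (c + K + a) + ln (1 + b)"
    using assms by (subst ln_mult) auto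
  finally show ?thesis
    using True by simp
next
  case False
  then show ?thesis
    using assms by (auto intro: ln_mono)
qed

lemma infsum_above_threshold_less:
  fixes g f :: "'a \<Rightarrow> real"
  assumes g_summable: "g summable_on A" and g_nonneg: "\<And>u. u \<in> A \<Longrightarrow> g u \<ge> 0" and "e > 0"
  obtains K where "K > 0" "(\<Sum>\<^sub>\<infinity>u\<in>A. if f u > K then g u else 0) < e"
proof -
  obtain F where F: "finite F" "F \<subseteq> A" "dist (sum g F) (infsum g A) \<le> e / 2"
    using infsum_finite_approximation[OF g_summable, of "e / 2"] \<open>e > 0\<close> by auto
  define K where "K = 1 + (\<Sum>u\<in>F. \<bar>f u\<bar>)"
  have "K > 0"
    unfolding K_def by (simp add: add_pos_nonneg sum_nonneg)
  have below_K: "f u < K" if "u \<in> F" for u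
    using member_le_sum[of u F "\<lambda>u. \<bar>f u\<bar>"] F(1) that unfolding K_def by force
  have g_outside: "g summable_on A - F"
    using g_summable by (rule summable_on_subset) auto
  have "(\<Sum>\<^sub>\<infinity>u\<in>A. if f u > K then g u else 0) = (\<Sum>\<^sub>\<infinity>u\<in>A - F. if f u > K then g u else 0)"
    by (intro infsum_cong_neutral) (auto dest: below_K)
  also have "\<dots> \<le> infsum g (A - F)"
    using g_nonneg by (intro infsum_mono summable_on_comparison_test[OF g_outside] g_outside) auto
  also have "\<dots> = infsum g A - sum g F"
    using F g_summable by (simp add: infsum_Diff summable_on_finite)
  also have "\<dots> < e"
    using F(3) \<open>e > 0\<close> unfolding dist_real_def by linarith
  finally show thesis
    using that \<open>K > 0\<close> by blast
qed

lemma conv_pow_log_moment_le: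
  fixes G :: "('a, 'b) monoid_scheme" (structure) and L \<mu> :: "'a \<Rightarrow> real"
  assumes "group G"
    and L_nonneg: "\<And>s. s \<in> carrier G \<Longrightarrow> L s \<ge> 0"
    and L_subadd: "\<And>s t. s \<in> carrier G \<Longrightarrow> t \<in> carrier G \<Longrightarrow> L (s \<otimes> t) \<le> L s + L t"
    and \<mu>_nonneg: "\<And>u. u \<in> carrier G \<Longrightarrow> \<mu> u \<ge> 0" and \<mu>_sum: "(\<mu> has_sum 1) (carrier G)"
    and "K \<ge> 0"
    and tail_summable: "(\<lambda>u. \<mu> u * (if L u > K then ln (1 + L u) else 0)) summable_on carrier G"
    and "c \<ge> 1"
  shows "(\<lambda>s. conv_pow G \<mu> n s * ln (c + L s)) summable_on carrier G \<and>
    (\<Sum>\<^sub>\<infinity>s\<in>carrier G. conv_pow G \<mu> n s * ln (c + L s))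
      \<le> ln (c + n * K + L \<one>) + n * (\<Sum>\<^sub>\<infinity>u\<in>carrier G. \<mu> u * (if L u > K then ln (1 + L u) else 0))"
  using \<open>c \<ge> 1\<close>
proof (induction n arbitrary: c)
  case 0
  show ?case
    using has_sum_conv_pow_0[OF \<open>group G\<close>, of \<mu> "\<lambda>s. ln (c + L s)"]
    by (simp add: has_sum_imp_summable infsumI)
next
  case (Suc n)
  interpret group G by fact
  let ?\<epsilon> = "\<Sum>\<^sub>\<infinity>u\<in>carrier G. \<mu> u * (if L u > K then ln (1 + L u) else 0)"
  have shift: "c + K + real n * K = c + real (Suc n) * K"
    by (simp add: algebra_simps)
  obtain IH_summable: "(\<lambda>t. conv_pow G \<mu> n t * ln (c + K + L t)) summable_on carrier G"
    and IH_le: "(\<Sum>\<^sub>\<infinity>t\<in>carrier G. conv_pow G \<mu> n t * ln (c + K + L t))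
      \<le> ln (c + real (Suc n) * K + L \<one>) + real n * ?\<epsilon>"
    using Suc.IH[of "c + K"] Suc.prems \<open>K \<ge> 0\<close> unfolding shift by auto
  have "(\<lambda>s. conv G (conv_pow G \<mu> n) \<mu> s * ln (c + L s)) summable_on carrier G \<and>
    (\<Sum>\<^sub>\<infinity>s\<in>carrier G. conv G (conv_pow G \<mu> n) \<mu> s * ln (c + L s))
      \<le> (\<Sum>\<^sub>\<infinity>t\<in>carrier G. conv_pow G \<mu> n t * ln (c + K + L t)) + ?\<epsilon>"
  proof (rule conv_weighted_infsum_le[OF \<open>group G\<close> _ _ \<mu>_nonneg \<mu>_sum _ _ IH_summable tail_summable])
    show "conv_pow G \<mu> n t \<ge> 0" if "t \<in> carrier G" for t
      using conv_pow_nonneg[OF \<open>group G\<close> \<mu>_nonneg that] .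
    show "(conv_pow G \<mu> n has_sum 1) (carrier G)"
      using has_sum_conv_pow[OF \<open>group G\<close> \<mu>_nonneg \<mu>_sum] .
    show "ln (c + L s) \<ge> 0" if "s \<in> carrier G" for s
      using Suc.prems L_nonneg[OF that] by simp
    show "ln (c + L (t \<otimes> u)) \<le> ln (c + K + L t) + (if L u > K then ln (1 + L u) else 0)"
      if "t \<in> carrier G" "u \<in> carrier G" for t u
      using Suc.prems \<open>K \<ge> 0\<close> L_nonneg L_subadd that
      by (intro ln_add_le_split_at_threshold) auto
  qed
  then show ?case
    using IH_le by (simp add: ring_distribs)
qed

lemma conv_pow_log_moment_sublinear:
  fixes G :: "('a, 'b) monoid_scheme" (structure) and L \<mu> :: "'a \<Rightarrow> real"
  assumes "group G"
    and L_nonneg: "\<And>s. s \<in> carrier G \<Longrightarrow> L s \<ge> 0"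
    and L_subadd: "\<And>s t. s \<in> carrier G \<Longrightarrow> t \<in> carrier G \<Longrightarrow> L (s \<otimes> t) \<le> L s + L t"
    and \<mu>_nonneg: "\<And>u. u \<in> carrier G \<Longrightarrow> \<mu> u \<ge> 0" and \<mu>_sum: "(\<mu> has_sum 1) (carrier G)"
    and log_summable: "(\<lambda>s. \<mu> s * ln (1 + L s)) summable_on carrier G"
  shows "(\<lambda>n. (1 / real n) * (\<Sum>\<^sub>\<infinity>s\<in>carrier G. conv_pow G \<mu> n s * ln (1 + L s))) \<longlonglongrightarrow> 0"
proof (rule tendstoI)
  fix e :: real
  assume "e > 0"
  interpret group G by fact
  define E where "E n = (\<Sum>\<^sub>\<infinity>s\<in>carrier G. conv_pow G \<mu> n s * ln (1 + L s))" for n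
  obtain K where "K > 0"
    and tail_small: "(\<Sum>\<^sub>\<infinity>u\<in>carrier G. if L u > K then \<mu> u * ln (1 + L u) else 0) < e / 2"
    using infsum_above_threshold_less[OF log_summable, of "e / 2" L] \<mu>_nonneg L_nonneg \<open>e > 0\<close>
    by auto
  define \<epsilon> where "\<epsilon> = (\<Sum>\<^sub>\<infinity>u\<in>carrier G. \<mu> u * (if L u > K then ln (1 + L u) else 0))"
  have "\<epsilon> = (\<Sum>\<^sub>\<infinity>u\<in>carrier G. if L u > K then \<mu> u * ln (1 + L u) else 0)"
    unfolding \<epsilon>_def by (intro infsum_cong) simp
  with tail_small have "\<epsilon> < e / 2"
    by simp
  have "(\<lambda>u. \<mu> u * (if L u > K then ln (1 + L u) else 0)) summable_on carrier G"
    by (intro summable_on_comparison_test[OF log_summable]) (auto simp: \<mu>_nonneg L_nonneg)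
  then have E_le: "E n \<le> ln (1 + n * K + L \<one>) + n * \<epsilon>" for n
    using conv_pow_log_moment_le[OF \<open>group G\<close> L_nonneg L_subadd \<mu>_nonneg \<mu>_sum] \<open>K > 0\<close>
    unfolding E_def \<epsilon>_def by simp
  have E_nonneg: "E n \<ge> 0" for n
    unfolding E_def using conv_pow_nonneg[OF \<open>group G\<close> \<mu>_nonneg] L_nonneg
    by (intro infsum_nonneg) simp
  have "(\<lambda>n. ln (1 + real n * K + L \<one>) / real n) \<longlonglongrightarrow> 0"
    using \<open>K > 0\<close> L_nonneg[OF one_closed] by real_asymp
  then have "eventually (\<lambda>n. ln (1 + real n * K + L \<one>) / real n < e / 2) sequentially"
    using \<open>e > 0\<close> by (intro order_tendstoD) auto
  then show "eventually (\<lambda>n. dist ((1 / real n) * E n) 0 < e) sequentially"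
    using eventually_gt_at_top[of 0]
  proof eventually_elim
    case (elim n)
    have "(1 / real n) * E n \<le> ln (1 + n * K + L \<one>) / real n + \<epsilon>"
      using mult_left_mono[OF E_le[of n], of "1 / real n"] elim by (simp add: field_simps)
    moreover have "(1 / real n) * E n \<ge> 0"
      using E_nonneg[of n] by simp
    ultimately show ?case
      using elim(1) \<open>\<epsilon> < e / 2\<close> unfolding dist_real_def by linarith
  qed
qed

theorem theorem3p6:
  fixes G :: "('a, 'b) monoid_scheme" and L :: "'a \<Rightarrow> real" and \<mu> :: "'a \<Rightarrow> real"
  assumes "group G"
    and "countable (carrier G)"
    and "\<forall>s\<in>carrier G. L s \<ge> 0"
    and "\<forall>s\<in>carrier G. \<forall>t\<in>carrier G. L (s \<otimes>\<^bsub>G\<^esub> t) \<le> L s + L t"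
    and "\<forall>s\<in>carrier G. \<mu> s \<ge> 0"
    and "(\<mu> has_sum 1) (carrier G)"
    and "(\<lambda>s. \<mu> s * ln (1 + L s)) summable_on carrier G"
  shows "(\<lambda>n. (1 / real n) * (\<Sum>\<^sub>\<infinity>s\<in>carrier G. conv_pow G \<mu> n s * ln (1 + L s)))
           \<longlonglongrightarrow> 0
         \<and> Ly G L \<mu> = 0"
proof -
  have "(\<lambda>n. (1 / real n) * (\<Sum>\<^sub>\<infinity>s\<in>carrier G. conv_pow G \<mu> n s * ln (1 + L s))) \<longlonglongrightarrow> 0"
    using assms(3-5) by (intro conv_pow_log_moment_sublinear[OF assms(1) _ _ _ assms(6,7)]) auto
  moreover from this have "Ly G L \<mu> = 0"
    unfolding Ly_def by (rule limI)
  ultimately show ?thesis ..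
qed

end
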